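(* For all $n\ge0$, $A_n(z)$ and $B_n(z)$ are rational functions of $z$ with simple poles at $0,t_1,\dots,t_m$, namely \[ A_n(z)=\frac{1-\sum_{k=1}^mR_{n,k}}{z}+\sum_{k=1}^m\frac{R_{n,k}}{z-t_k},\qquad B_n(z)=-\frac{n+\sum_{k=1}^m r_{n,k}}{z}+\sum_{k=1}^m\frac{r_{n,k}}{z-t_k}. \]
   Context: Let $m\ge1$, $\alpha>-1$, $0<t_1<\dots<t_m$, real $\omega_0,\dots,\omega_m$ with $\sum_{k=0}^\ell\omega_k\ge0$ for $\ell=0,\dots,m$, $\theta$ the Heaviside function, $w_0(x)=x^\alpha e^{-x}$, $w(x)=w_0(x)\big(\omega_0+\sum_k\omega_k\theta(x-t_k)\big)$ on $[0,\infty)$, $P_n$ the monic orthogonal polynomials w.r.t. $w$, $h_n=\int_0^\infty P_n^2w\,dx$, $R_{n,k}=\omega_k\frac{w_0(t_k)}{h_n}P_n^2(t_k)$, $r_{n,k}=\omega_k\frac{w_0(t_k)}{h_{n-1}}P_n(t_k)P_{n-1}(t_k)$, and ${\rm v}_0(z)=z-\alpha\ln z$. For $\alpha>0$, $A_n(z)=\frac1{h_n}\int_0^\infty\frac{{\rm v}_0'(z)-{\rm v}_0'(y)}{z-y}P_n^2(y)w(y)dy+\sum_k\frac{R_{n,k}}{z-t_k}$, $B_n(z)=\frac1{h_{n-1}}\int_0^\infty\frac{{\rm v}_0'(z)-{\rm v}_0'(y)}{z-y}P_n(y)P_{n-1}(y)w(y)dy+\sum_k\frac{r_{n,k}}{z-t_k}$;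 for $-1<\alpha\le0$, $A_n(z)=\frac1z\Big(\frac1{h_n}\int_0^\infty\frac{z{\rm v}_0'(z)-y{\rm v}_0'(y)}{z-y}P_n^2(y)w(y)dy-\sum_kR_{n,k}\Big)+\sum_k\frac{R_{n,k}}{z-t_k}$, $B_n(z)=\frac1z\Big(\frac1{h_{n-1}}\int_0^\infty\frac{z{\rm v}_0'(z)-y{\rm v}_0'(y)}{z-y}P_n(y)P_{n-1}(y)w(y)dy-\sum_kr_{n,k}-n\Big)+\sum_k\frac{r_{n,k}}{z-t_k}$. (Convention $r_{0,k}=0$.) *)

theory Defs
  imports "HOL-Analysis.Analysis" "HOL-Computational_Algebra.Polynomial"
begin

text \<open>Heaviside function (value at 0 is irrelevant for all integrals involved).\<close>
definition heaviside :: "real \<Rightarrow> real" where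
  "heaviside x = (if x \<ge> 0 then 1 else 0)"

definition w0 :: "real \<Rightarrow> real \<Rightarrow> real" where
  "w0 \<alpha> x = x powr \<alpha> * exp (- x)"

definition wt :: "real \<Rightarrow> nat \<Rightarrow> (nat \<Rightarrow> real) \<Rightarrow> (nat \<Rightarrow> real) \<Rightarrow> real \<Rightarrow> real" where
  "wt \<alpha> m \<omega> t x = w0 \<alpha> x * (\<omega> 0 + (\<Sum>k=1..m. \<omega> k * heaviside (x - t k)))"

definition Pprev :: "(nat \<Rightarrow> real poly) \<Rightarrow> nat \<Rightarrow> real poly" where
  "Pprev P n = (if n = 0 then 0 else P (n - 1))"

definition hn :: "real \<Rightarrow> nat \<Rightarrow> (nat \<Rightarrow> real) \<Rightarrow> (nat \<Rightarrow> real) \<Rightarrow> (nat \<Rightarrow> real poly) \<Rightarrow> nat \<Rightarrow> real" where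
  "hn \<alpha> m \<omega> t P n = (LINT y:{0..}|lborel. (poly (P n) y)\<^sup>2 * wt \<alpha> m \<omega> t y)"

text \<open>h_{n-1} (equal to 0 for n = 0 by the convention P_{-1} = 0).\<close>
definition hprev :: "real \<Rightarrow> nat \<Rightarrow> (nat \<Rightarrow> real) \<Rightarrow> (nat \<Rightarrow> real) \<Rightarrow> (nat \<Rightarrow> real poly) \<Rightarrow> nat \<Rightarrow> real" where
  "hprev \<alpha> m \<omega> t P n = (LINT y:{0..}|lborel. (poly (Pprev P n) y)\<^sup>2 * wt \<alpha> m \<omega> t y)"

definition Rnk :: "real \<Rightarrow> nat \<Rightarrow> (nat \<Rightarrow> real) \<Rightarrow> (nat \<Rightarrow> real) \<Rightarrow> (nat \<Rightarrow> real poly) \<Rightarrow> nat \<Rightarrow> nat \<Rightarrow> real" where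
  "Rnk \<alpha> m \<omega> t P n k = \<omega> k * w0 \<alpha> (t k) / hn \<alpha> m \<omega> t P n * (poly (P n) (t k))\<^sup>2"

definition rnk :: "real \<Rightarrow> nat \<Rightarrow> (nat \<Rightarrow> real) \<Rightarrow> (nat \<Rightarrow> real) \<Rightarrow> (nat \<Rightarrow> real poly) \<Rightarrow> nat \<Rightarrow> nat \<Rightarrow> real" where
  "rnk \<alpha> m \<omega> t P n k = (if n = 0 then 0 else
     \<omega> k * w0 \<alpha> (t k) / hprev \<alpha> m \<omega> t P n * poly (P n) (t k) * poly (Pprev P n) (t k))"

definition dv0 :: "real \<Rightarrow> complex \<Rightarrow> complex" where
  "dv0 \<alpha> z = 1 - complex_of_real \<alpha> / z"

definition An :: "real \<Rightarrow> nat \<Rightarrow> (nat \<Rightarrow> real) \<Rightarrow> (nat \<Rightarrow> real) \<Rightarrow> (nat \<Rightarrow> real poly) \<Rightarrow> nat \<Rightarrow> complex \<Rightarrow> complex" where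
  "An \<alpha> m \<omega> t P n z =
    (if \<alpha> > 0 then
       complex_of_real (1 / hn \<alpha> m \<omega> t P n) *
         (LINT y:{0..}|lborel. ((dv0 \<alpha> z - dv0 \<alpha> (of_real y)) / (z - of_real y)) *
             of_real ((poly (P n) y)\<^sup>2 * wt \<alpha> m \<omega> t y))
       + (\<Sum>k=1..m. of_real (Rnk \<alpha> m \<omega> t P n k) / (z - of_real (t k)))
     else
       (1 / z) * (complex_of_real (1 / hn \<alpha> m \<omega> t P n) *
         (LINT y:{0..}|lborel. ((z * dv0 \<alpha> z - of_real y * dv0 \<alpha> (of_real y)) / (z - of_real y)) *
             of_real ((poly (P n) y)\<^sup>2 * wt \<alpha> m \<omega> t y))
         - (\<Sum>k=1..m. of_real (Rnk \<alpha> m \<omega> t P n k)))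
       + (\<Sum>k=1..m. of_real (Rnk \<alpha> m \<omega> t P n k) / (z - of_real (t k))))"

definition Bn :: "real \<Rightarrow> nat \<Rightarrow> (nat \<Rightarrow> real) \<Rightarrow> (nat \<Rightarrow> real) \<Rightarrow> (nat \<Rightarrow> real poly) \<Rightarrow> nat \<Rightarrow> complex \<Rightarrow> complex" where
  "Bn \<alpha> m \<omega> t P n z =
    (if \<alpha> > 0 then
       complex_of_real (1 / hprev \<alpha> m \<omega> t P n) *
         (LINT y:{0..}|lborel. ((dv0 \<alpha> z - dv0 \<alpha> (of_real y)) / (z - of_real y)) *
             of_real (poly (P n) y * poly (Pprev P n) y * wt \<alpha> m \<omega> t y))
       + (\<Sum>k=1..m. of_real (rnk \<alpha> m \<omega> t P n k) / (z - of_real (t k)))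
     else
       (1 / z) * (complex_of_real (1 / hprev \<alpha> m \<omega> t P n) *
         (LINT y:{0..}|lborel. ((z * dv0 \<alpha> z - of_real y * dv0 \<alpha> (of_real y)) / (z - of_real y)) *
             of_real (poly (P n) y * poly (Pprev P n) y * wt \<alpha> m \<omega> t y))
         - (\<Sum>k=1..m. of_real (rnk \<alpha> m \<omega> t P n k)) - of_nat n)
       + (\<Sum>k=1..m. of_real (rnk \<alpha> m \<omega> t P n k) / (z - of_real (t k))))"

end

theory Submission
  imports Defs "HOL-Real_Asymp.Real_Asymp"
begin

(*
  For alpha > 0 the kernel (v0'(z) - v0'(y)) / (z - y) equals alpha / (z y), so the integrals in
  A_n and B_n are alpha / z times the integrals of P_n^2 w / y and P_n P_(n-1) w / y.  Integrating
  (Q w0)' = Q' w0 + alpha Q w0 / y - Q w0 from each jump point to infinity gives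
    alpha * int Q w / y = int Q w - int Q' w - sum_k omega_k w0(t_k) Q(t_k),
  and orthogonality gives int (P_n^2)' w = 0 and int (P_n P_(n-1))' w = n h_(n-1), which yields the
  residues at 0.  For alpha <= 0 the kernel (z v0'(z) - y v0'(y)) / (z - y) is identically 1, so the
  integrals are h_n and int P_n P_(n-1) w = 0.  Dividing by h_n is justified because w >= 0 on
  [0, oo) and w > 0 between two consecutive jumps where a partial sum of the omega_k is positive.
*)

lemma set_integrable_sum:
  fixes f :: "'i \<Rightarrow> 'a \<Rightarrow> 'b::{banach, second_countable_topology}"
  assumes "\<And>i. i \<in> I \<Longrightarrow> set_integrable M A (f i)"
  shows "set_integrable M A (\<lambda>x. \<Sum>i\<in>I. f i x)"
  unfolding set_integrable_def scaleR_sum_right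
  by (intro Bochner_Integration.integrable_sum assms[unfolded set_integrable_def])

lemma set_integral_sum:
  fixes f :: "'i \<Rightarrow> 'a \<Rightarrow> 'b::{banach, second_countable_topology}"
  assumes "\<And>i. i \<in> I \<Longrightarrow> set_integrable M A (f i)"
  shows "(LINT x:A|M. (\<Sum>i\<in>I. f i x)) = (\<Sum>i\<in>I. LINT x:A|M. f i x)"
  unfolding set_integrable_def set_lebesgue_integral_def scaleR_sum_right
  by (intro Bochner_Integration.integral_sum assms[unfolded set_integrable_def])

lemma monomial_times_w0:
  assumes "0 \<le> y"
  shows "y ^ i * w0 \<beta> y = w0 (\<beta> + real i) y"
  using assms by (cases "y = 0") (auto simp: w0_def powr_add powr_realpow)

lemma poly_times_w0:
  assumes "0 \<le> y"
  shows "poly Q y * w0 \<beta> y = (\<Sum>i\<le>degree Q. coeff Q i * w0 (\<beta> + real i) y)"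
  using assms by (simp add: poly_altdef sum_distrib_right mult.assoc monomial_times_w0)

lemma set_integrable_w0:
  assumes "\<beta> > -1"
  shows "set_integrable lborel {0..} (w0 \<beta>)"
proof -
  have "((\<lambda>y. y powr (\<beta> + 1 - 1) / exp y) has_integral Gamma (\<beta> + 1)) {0..}"
    by (rule Gamma_integral_real) (use assms in auto)
  then have "w0 \<beta> integrable_on {0..}"
    unfolding w0_def by (auto simp: exp_minus field_simps dest!: has_integral_integrable)
  then have "(\<lambda>y. y powr \<beta> * exp (- y)) absolutely_integrable_on {0..}"
    unfolding w0_def by (rule nonnegative_absolutely_integrable_1) auto
  then show ?thesis
    unfolding set_integrable_def w0_def by (subst (asm) integrable_completion) auto
qed

lemma set_integrable_poly_w0:
  assumes "\<beta> > -1"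
  shows "set_integrable lborel {0..} (\<lambda>y. poly Q y * w0 \<beta> y)"
proof -
  have "set_integrable lborel {0..} (\<lambda>y. \<Sum>i\<le>degree Q. coeff Q i * w0 (\<beta> + real i) y)"
    using assms by (intro set_integrable_sum set_integrable_mult_right set_integrable_w0) auto
  then show ?thesis
    by (rule set_integrable_cong[THEN iffD1, rotated -1]) (auto simp: poly_times_w0)
qed

lemma set_integrable_poly_div_w0:
  assumes "\<alpha> > 0"
  shows "set_integrable lborel {0..} (\<lambda>y. poly Q y / y * w0 \<alpha> y)"
proof -
  have "poly Q y * w0 (\<alpha> - 1) y = poly Q y / y * w0 \<alpha> y" if "y \<in> {0..}" for y
    using that by (cases "y = 0") (auto simp: w0_def powr_diff)
  with set_integrable_poly_w0[of "\<alpha> - 1" Q] assms show ?thesis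
    by (subst set_integrable_cong[OF refl refl, symmetric]) auto
qed

lemma tendsto_poly_w0_at_top: "((\<lambda>y. poly Q y * w0 \<beta> y) \<longlongrightarrow> 0) at_top"
proof -
  have "((\<lambda>y. \<Sum>i\<le>degree Q. coeff Q i * w0 (\<beta> + real i) y) \<longlongrightarrow> 0) at_top"
    unfolding w0_def by (intro tendsto_null_sum tendsto_mult_right_zero) real_asymp
  moreover have "eventually (\<lambda>y. (\<Sum>i\<le>degree Q. coeff Q i * w0 (\<beta> + real i) y)
      = poly Q y * w0 \<beta> y) at_top"
    using eventually_ge_at_top[of 0] by eventually_elim (simp add: poly_times_w0)
  ultimately show ?thesis
    by (rule Lim_transform_eventually)
qed

lemma tendsto_poly_w0_at_right:
  assumes "\<alpha> > 0" "a \<ge> 0"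
  shows "((\<lambda>y. poly Q y * w0 \<alpha> y) \<longlongrightarrow> poly Q a * w0 \<alpha> a) (at_right a)"
proof (cases "a = 0")
  case True
  have "(w0 \<alpha> \<longlongrightarrow> 0) (at_right 0)"
    unfolding w0_def using assms(1) by real_asymp
  then have "((\<lambda>y. poly Q y * w0 \<alpha> y) \<longlongrightarrow> poly Q 0 * 0) (at_right 0)"
    by (intro tendsto_intros)
  with True show ?thesis
    by (simp add: w0_def)
next
  case False
  with assms have "isCont (\<lambda>y. poly Q y * w0 \<alpha> y) a"
    unfolding w0_def by (intro continuous_intros) auto
  then show ?thesis
    by (simp add: isCont_def filterlim_at_split)
qed

lemma w0_has_real_derivative:
  assumes "y > 0"
  shows "(w0 \<alpha> has_real_derivative (\<alpha> / y - 1) * w0 \<alpha> y) (at y)"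
  using assms unfolding w0_def
  by (auto intro!: derivative_eq_intros simp: powr_diff field_simps)

lemma set_integral_poly_w0_by_parts:
  assumes "\<alpha> > 0" "a \<ge> 0"
  shows "\<alpha> * (LINT y:{a..}|lborel. poly Q y / y * w0 \<alpha> y) =
    (LINT y:{a..}|lborel. poly Q y * w0 \<alpha> y) - (LINT y:{a..}|lborel. poly (pderiv Q) y * w0 \<alpha> y)
    - poly Q a * w0 \<alpha> a"
proof -
  define f where
    "f y = poly (pderiv Q) y * w0 \<alpha> y + \<alpha> * (poly Q y / y * w0 \<alpha> y) - poly Q y * w0 \<alpha> y" for y
  have sub: "{a..} \<subseteq> {0..}"
    using assms(2) by auto
  have int_deriv: "set_integrable lborel {a..} (\<lambda>y. poly (pderiv Q) y * w0 \<alpha> y)"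
    and int: "set_integrable lborel {a..} (\<lambda>y. poly Q y * w0 \<alpha> y)"
    using assms(1) by (auto intro!: set_integrable_subset[OF set_integrable_poly_w0 _ sub])
  have int_div: "set_integrable lborel {a..} (\<lambda>y. poly Q y / y * w0 \<alpha> y)"
    by (rule set_integrable_subset[OF set_integrable_poly_div_w0[OF assms(1)] _ sub]) simp
  have int_f: "set_integrable lborel {a..} f"
    unfolding f_def
    by (intro set_integral_diff(1) set_integral_add(1) set_integrable_mult_right int_deriv int_div int)
  have "(LINT y:{a<..}|lborel. f y) = 0 - poly Q a * w0 \<alpha> a"
    unfolding interval_integral_to_infinity_eq[symmetric]
  proof (rule interval_integral_FTC_integrable)
    fix x assume "ereal a < ereal x"
    with assms(2) have "x > 0" by simp
    have "((\<lambda>y. poly Q y * w0 \<alpha> y) has_real_derivative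
        poly (pderiv Q) x * w0 \<alpha> x + (\<alpha> / x - 1) * w0 \<alpha> x * poly Q x) (at x)"
      by (rule DERIV_mult[OF poly_DERIV w0_has_real_derivative[OF \<open>x > 0\<close>]])
    moreover have "poly (pderiv Q) x * w0 \<alpha> x + (\<alpha> / x - 1) * w0 \<alpha> x * poly Q x = f x"
      by (simp add: f_def algebra_simps)
    ultimately show "((\<lambda>y. poly Q y * w0 \<alpha> y) has_vector_derivative f x) (at x)"
      by (simp add: has_real_derivative_iff_has_vector_derivative)
    show "isCont f x"
      unfolding f_def w0_def using \<open>x > 0\<close> by (intro continuous_intros) auto
  next
    show "set_integrable lborel (einterval (ereal a) \<infinity>) f"
      by (rule set_integrable_subset[OF int_f]) (auto simp: einterval_def)
    show "(((\<lambda>y. poly Q y * w0 \<alpha> y) \<circ> real_of_ereal) \<longlongrightarrow> poly Q a * w0 \<alpha> a)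
        (at_right (ereal a))"
      unfolding ereal_tendsto_simps1 by (rule tendsto_poly_w0_at_right) fact+
    show "(((\<lambda>y. poly Q y * w0 \<alpha> y) \<circ> real_of_ereal) \<longlongrightarrow> 0) (at_left \<infinity>)"
      unfolding ereal_tendsto_simps1 by (rule tendsto_poly_w0_at_top)
  qed auto
  moreover have "(LINT y:{a<..}|lborel. f y) = (LINT y:{a..}|lborel. f y)"
    by (rule set_integral_discrete_difference[where X="{a}"]) auto
  moreover have "(LINT y:{a..}|lborel. f y) = (LINT y:{a..}|lborel. poly (pderiv Q) y * w0 \<alpha> y)
      + \<alpha> * (LINT y:{a..}|lborel. poly Q y / y * w0 \<alpha> y) - (LINT y:{a..}|lborel. poly Q y * w0 \<alpha> y)"
    unfolding f_def
    by (simp only: set_integral_diff(2)[OF set_integral_add(1) int] set_integral_add(2)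
        set_integral_mult_right int_deriv set_integrable_mult_right int_div)
  ultimately show ?thesis
    by linarith
qed

section \<open>Integration by parts against the jump weight\<close>

lemma set_integral_heaviside:
  assumes "0 \<le> c" "set_integrable lborel {0..} (g :: real \<Rightarrow> real)"
  shows "set_integrable lborel {0..} (\<lambda>y. heaviside (y - c) * g y)"
    and "(LINT y:{0..}|lborel. heaviside (y - c) * g y) = (LINT y:{c..}|lborel. g y)"
proof -
  have indicator_eq: "(\<lambda>y. indicat_real {0..} y *\<^sub>R (heaviside (y - c) * g y))
      = (\<lambda>y. indicat_real {c..} y *\<^sub>R g y)"
    using assms(1) by (auto simp: heaviside_def indicator_def)
  have "set_integrable lborel {c..} g"
    by (rule set_integrable_subset[OF assms(2)]) (use assms(1) in auto)
  then show "set_integrable lborel {0..} (\<lambda>y. heaviside (y - c) * g y)"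
    unfolding set_integrable_def indicator_eq .
  show "(LINT y:{0..}|lborel. heaviside (y - c) * g y) = (LINT y:{c..}|lborel. g y)"
    unfolding set_lebesgue_integral_def indicator_eq ..
qed

lemma set_integral_wt:
  assumes "\<forall>k\<in>{1..m}. 0 \<le> t k" and int: "set_integrable lborel {0..} (\<lambda>y. f y * w0 \<alpha> y)"
  shows "set_integrable lborel {0..} (\<lambda>y. f y * wt \<alpha> m \<omega> t y)"
    and "(LINT y:{0..}|lborel. f y * wt \<alpha> m \<omega> t y) = \<omega> 0 * (LINT y:{0..}|lborel. f y * w0 \<alpha> y)
          + (\<Sum>k=1..m. \<omega> k * (LINT y:{t k..}|lborel. f y * w0 \<alpha> y))"
proof -
  have wt_eq: "f y * wt \<alpha> m \<omega> t y = \<omega> 0 * (f y * w0 \<alpha> y) +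
      (\<Sum>k=1..m. \<omega> k * (heaviside (y - t k) * (f y * w0 \<alpha> y)))" for y
    by (simp add: wt_def sum_distrib_left sum_distrib_right algebra_simps)
  have int_k: "set_integrable lborel {0..} (\<lambda>y. \<omega> k * (heaviside (y - t k) * (f y * w0 \<alpha> y)))"
    if "k \<in> {1..m}" for k
    using set_integral_heaviside(1)[OF _ int] assms(1) that by auto
  then have int_sum: "set_integrable lborel {0..}
      (\<lambda>y. \<Sum>k=1..m. \<omega> k * (heaviside (y - t k) * (f y * w0 \<alpha> y)))"
    by (rule set_integrable_sum)
  with int show "set_integrable lborel {0..} (\<lambda>y. f y * wt \<alpha> m \<omega> t y)"
    unfolding wt_eq by (intro set_integral_add(1) set_integrable_mult_right)
  have "(LINT y:{0..}|lborel. \<Sum>k=1..m. \<omega> k * (heaviside (y - t k) * (f y * w0 \<alpha> y)))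
      = (\<Sum>k=1..m. LINT y:{0..}|lborel. \<omega> k * (heaviside (y - t k) * (f y * w0 \<alpha> y)))"
    using int_k by (rule set_integral_sum)
  also have "\<dots> = (\<Sum>k=1..m. \<omega> k * (LINT y:{t k..}|lborel. f y * w0 \<alpha> y))"
    using set_integral_heaviside(2)[OF _ int] assms(1) by (intro sum.cong) auto
  finally show "(LINT y:{0..}|lborel. f y * wt \<alpha> m \<omega> t y)
      = \<omega> 0 * (LINT y:{0..}|lborel. f y * w0 \<alpha> y)
        + (\<Sum>k=1..m. \<omega> k * (LINT y:{t k..}|lborel. f y * w0 \<alpha> y))"
    using int int_sum unfolding wt_eq by (simp add: set_integral_add set_integrable_mult_right)
qed

lemma set_integral_poly_wt_by_parts:
  assumes "\<alpha> > 0" and t_nonneg: "\<forall>k\<in>{1..m}. 0 \<le> t k"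
  shows "\<alpha> * (LINT y:{0..}|lborel. poly Q y / y * wt \<alpha> m \<omega> t y) =
    (LINT y:{0..}|lborel. poly Q y * wt \<alpha> m \<omega> t y)
    - (LINT y:{0..}|lborel. poly (pderiv Q) y * wt \<alpha> m \<omega> t y)
    - (\<Sum>k=1..m. \<omega> k * w0 \<alpha> (t k) * poly Q (t k))"
proof -
  note split_div = set_integral_wt(2)[OF t_nonneg set_integrable_poly_div_w0[OF assms(1)], of Q \<omega>]
  note split = set_integral_wt(2)[OF t_nonneg set_integrable_poly_w0, of \<alpha> _ \<omega>]
  note by_parts = set_integral_poly_w0_by_parts[OF assms(1), of _ Q]
  have "\<alpha> * (LINT y:{0..}|lborel. poly Q y / y * wt \<alpha> m \<omega> t y) =
      \<omega> 0 * (\<alpha> * (LINT y:{0..}|lborel. poly Q y / y * w0 \<alpha> y)) +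
      (\<Sum>k=1..m. \<omega> k * (\<alpha> * (LINT y:{t k..}|lborel. poly Q y / y * w0 \<alpha> y)))"
    unfolding split_div by (simp add: algebra_simps sum_distrib_left)
  also have "\<dots> = \<omega> 0 * ((LINT y:{0..}|lborel. poly Q y * w0 \<alpha> y)
        - (LINT y:{0..}|lborel. poly (pderiv Q) y * w0 \<alpha> y)) +
      (\<Sum>k=1..m. \<omega> k * ((LINT y:{t k..}|lborel. poly Q y * w0 \<alpha> y)
        - (LINT y:{t k..}|lborel. poly (pderiv Q) y * w0 \<alpha> y) - poly Q (t k) * w0 \<alpha> (t k)))"
    \<comment> \<open>there is no boundary term at \<open>0\<close> because \<open>w0 \<alpha> 0 = 0\<close>\<close>
    using by_parts[of 0] by_parts t_nonneg by (simp add: w0_def)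
  also have "\<dots> = (LINT y:{0..}|lborel. poly Q y * wt \<alpha> m \<omega> t y)
      - (LINT y:{0..}|lborel. poly (pderiv Q) y * wt \<alpha> m \<omega> t y)
      - (\<Sum>k=1..m. \<omega> k * w0 \<alpha> (t k) * poly Q (t k))"
    using assms(1) by (simp add: split sum_subtractf sum.distrib algebra_simps sum_distrib_left)
  finally show ?thesis .
qed

section \<open>Orthogonality to polynomials of lower degree\<close>

text \<open>The degree bound on \<open>Q\<close> is stated through its coefficients so that \<open>Q = 0\<close> is covered
  also for \<open>n = 0\<close>.\<close>

lemma orthogonal_to_lower_degree:
  fixes L :: "'a::field poly \<Rightarrow> 'a"
  assumes add: "\<And>p q. L (p + q) = L p + L q"
    and smult: "\<And>c p. L (smult c p) = c * L p"
    and monic: "\<And>k. degree (P k) = k \<and> lead_coeff (P k) = 1"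
    and orth: "\<And>k. k < n \<Longrightarrow> L (P k * P n) = 0"
    and lower: "\<forall>i\<ge>n. coeff Q i = 0"
  shows "L (Q * P n) = 0"
proof -
  have "L (Q * P n) = 0" if "\<forall>i\<ge>d. coeff Q i = 0" "d \<le> n" for d Q
    using that
  proof (induction d arbitrary: Q)
    case 0
    then have "Q = 0"
      by (simp add: poly_eq_iff)
    moreover have "L 0 = 0"
      using smult[of 0 0] by simp
    ultimately show ?case
      by simp
  next
    case (Suc d)
    define R where "R = Q - smult (coeff Q d) (P d)"
    have "coeff R i = 0" if "d \<le> i" for i
      using that Suc.prems(1) monic[of d] by (cases "i = d") (auto simp: R_def coeff_eq_0)
    with Suc have "L (R * P n) = 0"
      by simp
    moreover have "Q * P n = smult (coeff Q d) (P d * P n) + R * P n"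
      by (simp add: R_def algebra_simps)
    ultimately show ?case
      using orth[of d] Suc.prems(2) add smult by simp
  qed
  with lower show ?thesis
    by blast
qed

lemma coeff_pderiv_minus_smult_monic:
  fixes p q :: "'a::idom poly"
  assumes "degree p = Suc n" "lead_coeff p = 1" "degree q = n" "lead_coeff q = 1" "n \<le> i"
  shows "coeff (pderiv p - smult (of_nat (Suc n)) q) i = 0"
proof (cases "i = n")
  case False
  with assms have "coeff p (Suc i) = 0" "coeff q i = 0"
    by (auto intro: coeff_eq_0)
  then show ?thesis
    by (simp add: coeff_pderiv)
qed (use assms in \<open>simp add: coeff_pderiv\<close>)

section \<open>Positivity of the jump weight\<close>

lemma strict_mono_on_atLeastAtMost_Suc:
  fixes t :: "nat \<Rightarrow> 'a::preorder"
  assumes "\<And>k. a \<le> k \<Longrightarrow> k < b \<Longrightarrow> t k < t (Suc k)"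
  shows "strict_mono_on {a..b} t"
proof (rule strict_mono_onI)
  fix i j assume "i \<in> {a..b}" "j \<in> {a..b}" "i < j"
  then show "t i < t j"
  proof (induction j)
    case (Suc j)
    show ?case
    proof (cases "i = j")
      case False
      with Suc have "t i < t j"
        by auto
      also have "t j < t (Suc j)"
        using Suc.prems False assms by auto
      finally show ?thesis .
    qed (use Suc.prems assms in auto)
  qed simp
qed

lemma wt_eq_w0_times_partial_sum:
  assumes "l \<le> m" "\<forall>k\<in>{1..m}. t k \<le> y \<longleftrightarrow> k \<le> l"
  shows "wt \<alpha> m \<omega> t y = w0 \<alpha> y * (\<Sum>k\<le>l. \<omega> k)"
proof -
  have "(\<Sum>k=1..m. \<omega> k * heaviside (y - t k)) = (\<Sum>k=1..m. if k \<in> {..l} then \<omega> k else 0)"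
    using assms(2) by (intro sum.cong) (auto simp: heaviside_def)
  also have "\<dots> = (\<Sum>k\<in>{1..m} \<inter> {..l}. \<omega> k)"
    by (rule sum.inter_restrict[symmetric]) simp
  also have "{1..m} \<inter> {..l} = {1..l}"
    using assms(1) by auto
  finally have "\<omega> 0 + (\<Sum>k=1..m. \<omega> k * heaviside (y - t k)) = (\<Sum>k\<le>l. \<omega> k)"
    by (simp add: atMost_atLeast0 sum.atLeast_Suc_atMost)
  then show ?thesis
    by (simp add: wt_def)
qed

lemma mono_on_jump_count:
  fixes t :: "nat \<Rightarrow> 'a::linorder"
  assumes "mono_on {1..m} t"
  obtains l where "l \<le> m" "\<forall>k\<in>{1..m}. t k \<le> y \<longleftrightarrow> k \<le> l"
proof -
  define S where "S = {l. l \<le> m \<and> (\<forall>k\<in>{1..l}. t k \<le> y)}"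
  have "S \<subseteq> {..m}"
    by (auto simp: S_def)
  then have "finite S"
    by (rule finite_subset) simp
  moreover have "0 \<in> S"
    by (simp add: S_def)
  ultimately have "Max S \<in> S"
    using Max_in by blast
  then have max: "Max S \<le> m" "\<And>k. k \<in> {1..Max S} \<Longrightarrow> t k \<le> y"
    unfolding S_def by blast+
  have "k \<le> Max S" if k: "k \<in> {1..m}" "t k \<le> y" for k
  proof -
    have "t j \<le> y" if "j \<in> {1..k}" for j
      using mono_onD[OF assms, of j k] that k by auto
    with k have "k \<in> S"
      by (simp add: S_def)
    with \<open>finite S\<close> show ?thesis
      by simp
  qed
  moreover have "t k \<le> y" if "k \<in> {1..m}" "k \<le> Max S" for k
    using max(2) that by simp
  ultimately show thesis
    using that[of "Max S"] max(1) by blast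
qed

lemma wt_nonneg:
  assumes "mono_on {1..m} t" "\<forall>l\<le>m. 0 \<le> (\<Sum>k\<le>l. \<omega> k)"
  shows "0 \<le> wt \<alpha> m \<omega> t y"
proof -
  obtain l where "l \<le> m" "\<forall>k\<in>{1..m}. t k \<le> y \<longleftrightarrow> k \<le> l"
    using mono_on_jump_count[OF assms(1)] .
  with assms(2) show ?thesis
    by (simp add: wt_eq_w0_times_partial_sum w0_def)
qed

lemma wt_pos_between_jumps:
  assumes mono: "strict_mono_on {1..m} t" and "0 < t 1" "l \<le> m" "0 < (\<Sum>k\<le>l. \<omega> k)"
  obtains a b where "0 \<le> a" "a < b" "\<And>y. y \<in> {a<..<b} \<Longrightarrow> 0 < wt \<alpha> m \<omega> t y"
proof -
  define a where "a = (if l = 0 then 0 else t l)"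
  define b where "b = (if l = m then a + 1 else t (Suc l))"
  have t_le: "t i \<le> t j" if "i \<in> {1..m}" "j \<in> {1..m}" "i \<le> j" for i j
    using mono_onD[OF strict_mono_on_imp_mono_on[OF mono] that] .
  have "0 \<le> a"
    using assms(2,3) t_le[of 1 l] by (auto simp: a_def)
  moreover have "a < b"
    using assms(2,3) strict_mono_onD[OF mono, of l "Suc l"] by (auto simp: a_def b_def)
  moreover have "0 < wt \<alpha> m \<omega> t y" if y: "y \<in> {a<..<b}" for y
  proof -
    have "\<forall>k\<in>{1..m}. t k \<le> y \<longleftrightarrow> k \<le> l"
    proof
      fix k assume k: "k \<in> {1..m}"
      show "t k \<le> y \<longleftrightarrow> k \<le> l"
      proof
        assume "k \<le> l"
        with k assms(3) t_le[of k l] y show "t k \<le> y"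
          by (auto simp: a_def)
      next
        assume "t k \<le> y"
        show "k \<le> l"
        proof (rule ccontr)
          assume "\<not> k \<le> l"
          with k have "l < m" "t (Suc l) \<le> t k"
            using t_le[of "Suc l" k] by auto
          with y \<open>t k \<le> y\<close> show False
            by (simp add: b_def)
        qed
      qed
    qed
    moreover have "0 < w0 \<alpha> y"
      using y \<open>0 \<le> a\<close> by (simp add: w0_def)
    ultimately show ?thesis
      using assms(3,4) by (simp add: wt_eq_w0_times_partial_sum)
  qed
  ultimately show thesis
    by (rule that)
qed

lemma set_integral_pos_if_pos_on_interval:
  fixes f :: "real \<Rightarrow> real"
  assumes int: "set_integrable lborel A f" and nonneg: "\<And>y. y \<in> A \<Longrightarrow> 0 \<le> f y"
    and "{a<..<b} \<subseteq> A" "a < b" and pos: "AE y in lborel. y \<in> {a<..<b} \<longrightarrow> 0 < f y"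
  shows "0 < (LINT y:A|lborel. f y)"
proof -
  define g where "g = (\<lambda>y. indicat_real A y *\<^sub>R f y)"
  have g_int: "integrable lborel g"
    using int by (simp add: g_def set_integrable_def)
  have g_nonneg: "AE y in lborel. 0 \<le> g y"
    using nonneg by (simp add: g_def indicator_def)
  have "integral\<^sup>L lborel g \<noteq> 0"
  proof
    assume "integral\<^sup>L lborel g = 0"
    with g_int g_nonneg have "AE y in lborel. g y = 0"
      by (simp add: integral_nonneg_eq_0_iff_AE)
    with pos have "AE y in lborel. y \<notin> {a<..<b}"
      by eventually_elim (use \<open>{a<..<b} \<subseteq> A\<close> in \<open>auto simp: g_def\<close>)
    moreover have "{y \<in> space lborel. \<not> y \<notin> {a<..<b}} = {a<..<b}"
      by auto
    ultimately have "emeasure lborel {a<..<b} = 0"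
      using AE_iff_measurable[of "{a<..<b}" lborel "\<lambda>y. y \<notin> {a<..<b}"] by simp
    with \<open>a < b\<close> show False
      using emeasure_lborel_Ioo[of a b] by simp
  qed
  moreover have "0 \<le> integral\<^sup>L lborel g"
    using g_nonneg by (rule integral_nonneg_AE)
  moreover have "(LINT y:A|lborel. f y) = integral\<^sup>L lborel g"
    by (simp only: set_lebesgue_integral_def g_def)
  ultimately show ?thesis
    by linarith
qed

section \<open>The kernels of \<open>A\<^sub>n\<close> and \<open>B\<^sub>n\<close>\<close>

lemma dv0_divided_difference:
  assumes "z \<noteq> 0" "w \<noteq> 0" "z \<noteq> w"
  shows "(dv0 \<alpha> z - dv0 \<alpha> w) / (z - w) = of_real \<alpha> / (z * w)"
  using assms by (simp add: dv0_def field_simps)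

lemma times_dv0_divided_difference:
  assumes "z \<noteq> 0" "w \<noteq> 0" "z \<noteq> w"
  shows "(z * dv0 \<alpha> z - w * dv0 \<alpha> w) / (z - w) = 1"
  using assms by (simp add: dv0_def field_simps)

lemma set_integral_dv0_divided_difference:
  assumes "z \<noteq> 0"
  shows "(LINT y:{0..}|lborel. (dv0 \<alpha> z - dv0 \<alpha> (of_real y)) / (z - of_real y) * of_real (f y))
    = of_real \<alpha> / z * of_real (LINT y:{0..}|lborel. f y / y)"
proof -
  have "(LINT y:{0..}|lborel. (dv0 \<alpha> z - dv0 \<alpha> (of_real y)) / (z - of_real y) * of_real (f y))
      = (LINT y:{0..}|lborel. of_real \<alpha> / z * of_real (f y / y))"
    unfolding set_lebesgue_integral_def
  proof (rule integral_discrete_difference[where X="{0, Re z}"])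
    fix y :: real
    assume "y \<notin> {0, Re z}"
    then have "y \<noteq> 0" "z \<noteq> of_real y"
      by auto
    with assms show "indicat_real {0..} y *\<^sub>R
        ((dv0 \<alpha> z - dv0 \<alpha> (of_real y)) / (z - of_real y) * of_real (f y))
        = indicat_real {0..} y *\<^sub>R (of_real \<alpha> / z * of_real (f y / y))"
      by (simp add: dv0_divided_difference)
  qed auto
  then show ?thesis
    by (simp only: set_integral_mult_right set_integral_complex_of_real)
qed

lemma set_integral_times_dv0_divided_difference:
  assumes "z \<noteq> 0"
  shows "(LINT y:{0..}|lborel. (z * dv0 \<alpha> z - of_real y * dv0 \<alpha> (of_real y)) / (z - of_real y) * of_real (f y))
    = of_real (LINT y:{0..}|lborel. f y)"
proof -
  have "(LINT y:{0..}|lborel. (z * dv0 \<alpha> z - of_real y * dv0 \<alpha> (of_real y)) / (z - of_real y) * of_real (f y))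
      = (LINT y:{0..}|lborel. complex_of_real (f y))"
    unfolding set_lebesgue_integral_def
  proof (rule integral_discrete_difference[where X="{0, Re z}"])
    fix y :: real
    assume "y \<notin> {0, Re z}"
    then have "y \<noteq> 0" "z \<noteq> of_real y"
      by auto
    with assms show "indicat_real {0..} y *\<^sub>R
        ((z * dv0 \<alpha> z - of_real y * dv0 \<alpha> (of_real y)) / (z - of_real y) * of_real (f y))
        = indicat_real {0..} y *\<^sub>R complex_of_real (f y)"
      by (simp add: times_dv0_divided_difference)
  qed auto
  then show ?thesis
    by (simp add: set_integral_complex_of_real)
qed

locale laguerre_jumps_ops =
  fixes \<alpha> :: real and m :: nat and \<omega> t :: "nat \<Rightarrow> real" and P :: "nat \<Rightarrow> real poly"
  assumes alpha_gt: "\<alpha> > -1"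
    and t_1_pos: "0 < t 1"
    and jumps_strict_mono: "strict_mono_on {1..m} t"
    and partial_sums_nonneg: "\<forall>l\<le>m. 0 \<le> (\<Sum>k\<le>l. \<omega> k)"
    and partial_sum_pos: "\<exists>l\<le>m. 0 < (\<Sum>k\<le>l. \<omega> k)"
    and monic: "\<forall>n. degree (P n) = n \<and> lead_coeff (P n) = 1"
    and orthogonal: "\<forall>i j. i \<noteq> j \<longrightarrow>
      (LINT y:{0..}|lborel. poly (P i) y * poly (P j) y * wt \<alpha> m \<omega> t y) = 0"
begin

lemma degree_P [simp]: "degree (P n) = n"
  using monic by simp

lemma coeff_P_self [simp]: "coeff (P n) n = 1"
  using monic by (metis degree_P)

lemma jumps_nonneg: "\<forall>k\<in>{1..m}. 0 \<le> t k"
  using t_1_pos mono_onD[OF strict_mono_on_imp_mono_on[OF jumps_strict_mono], of 1] by force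

definition weighted_integral :: "real poly \<Rightarrow> real" where
  "weighted_integral Q = (LINT y:{0..}|lborel. poly Q y * wt \<alpha> m \<omega> t y)"

lemma set_integrable_poly_wt: "set_integrable lborel {0..} (\<lambda>y. poly Q y * wt \<alpha> m \<omega> t y)"
  using set_integral_wt(1)[OF jumps_nonneg set_integrable_poly_w0[OF alpha_gt]] .

lemma weighted_integral_add: "weighted_integral (p + q) = weighted_integral p + weighted_integral q"
  by (simp add: weighted_integral_def distrib_right set_integrable_poly_wt)

lemma weighted_integral_smult: "weighted_integral (smult c p) = c * weighted_integral p"
  by (simp add: weighted_integral_def mult.assoc)

lemma weighted_integral_lower_degree:
  assumes "\<forall>i\<ge>n. coeff Q i = 0"
  shows "weighted_integral (Q * P n) = 0"
  by (rule orthogonal_to_lower_degree[OF weighted_integral_add weighted_integral_smult])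
    (use orthogonal assms in \<open>auto simp: weighted_integral_def\<close>)

lemma hn_eq_weighted_integral: "hn \<alpha> m \<omega> t P n = weighted_integral (P n * P n)"
  by (simp add: hn_def weighted_integral_def power2_eq_square)

lemma hn_pos: "0 < hn \<alpha> m \<omega> t P n"
proof -
  obtain l where "l \<le> m" "0 < (\<Sum>k\<le>l. \<omega> k)"
    using partial_sum_pos by blast
  then obtain a b where "0 \<le> a" "a < b" and wt_pos: "\<And>y. y \<in> {a<..<b} \<Longrightarrow> 0 < wt \<alpha> m \<omega> t y"
    using wt_pos_between_jumps[OF jumps_strict_mono t_1_pos] by blast
  have "P n \<noteq> 0"
    using monic by (metis leading_coeff_0_iff zero_neq_one)
  then have "AE y in lborel. y \<notin> {y. poly (P n) y = 0}"
    by (intro AE_not_in finite_imp_null_set_lborel poly_roots_finite)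
  then have "AE y in lborel. y \<in> {a<..<b} \<longrightarrow> 0 < (poly (P n) y)\<^sup>2 * wt \<alpha> m \<omega> t y"
    by eventually_elim (simp add: wt_pos)
  moreover have "0 \<le> (poly (P n) y)\<^sup>2 * wt \<alpha> m \<omega> t y" for y
    using wt_nonneg[OF strict_mono_on_imp_mono_on[OF jumps_strict_mono] partial_sums_nonneg] by simp
  moreover have "set_integrable lborel {0..} (\<lambda>y. (poly (P n) y)\<^sup>2 * wt \<alpha> m \<omega> t y)"
    using set_integrable_poly_wt[of "P n ^ 2"] by simp
  ultimately show ?thesis
    unfolding hn_def using \<open>0 \<le> a\<close> \<open>a < b\<close> by (intro set_integral_pos_if_pos_on_interval) auto
qed

lemma coeff_pderiv_P: "n \<le> i \<Longrightarrow> coeff (pderiv (P n)) i = 0"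
  using monic by (simp add: coeff_pderiv coeff_eq_0)

lemma weighted_integral_pderiv_sq: "weighted_integral (pderiv (P n * P n)) = 0"
proof -
  have "weighted_integral (pderiv (P n) * P n) = 0"
    by (rule weighted_integral_lower_degree) (simp add: coeff_pderiv_P)
  moreover have "pderiv (P n * P n) = pderiv (P n) * P n + pderiv (P n) * P n"
    by (simp add: pderiv_mult mult.commute)
  ultimately show ?thesis
    by (simp only: weighted_integral_add add_0)
qed

lemma weighted_integral_pderiv_consecutive:
  "weighted_integral (pderiv (P (Suc n) * P n)) = real (Suc n) * hn \<alpha> m \<omega> t P n"
proof -
  define R where "R = pderiv (P (Suc n)) - smult (of_nat (Suc n)) (P n)"
  have "weighted_integral (R * P n) = 0"
    unfolding R_def by (intro weighted_integral_lower_degree allI impI coeff_pderiv_minus_smult_monic) auto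
  moreover have "weighted_integral (pderiv (P n) * P (Suc n)) = 0"
    by (rule weighted_integral_lower_degree) (simp add: coeff_pderiv_P)
  moreover have "pderiv (P (Suc n) * P n)
      = pderiv (P n) * P (Suc n) + smult (of_nat (Suc n)) (P n * P n) + R * P n"
    by (simp add: R_def pderiv_mult algebra_simps)
  ultimately show ?thesis
    by (simp add: weighted_integral_add weighted_integral_smult hn_eq_weighted_integral)
qed

lemma alpha_integral_div_by_parts:
  assumes "\<alpha> > 0"
  shows "\<alpha> * (LINT y:{0..}|lborel. poly Q y / y * wt \<alpha> m \<omega> t y) =
    weighted_integral Q - weighted_integral (pderiv Q) - (\<Sum>k=1..m. \<omega> k * w0 \<alpha> (t k) * poly Q (t k))"
  using set_integral_poly_wt_by_parts[OF assms jumps_nonneg] by (simp add: weighted_integral_def)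

lemma An_partial_fractions:
  assumes "z \<noteq> 0"
  shows "An \<alpha> m \<omega> t P n z =
    (1 - (\<Sum>k=1..m. of_real (Rnk \<alpha> m \<omega> t P n k))) / z
    + (\<Sum>k=1..m. of_real (Rnk \<alpha> m \<omega> t P n k) / (z - of_real (t k)))"
    (is "_ = _ + ?poles")
proof -
  define h where "h = hn \<alpha> m \<omega> t P n"
  define S where "S = (\<Sum>k=1..m. \<omega> k * w0 \<alpha> (t k) * poly (P n * P n) (t k))"
  have "0 < h"
    unfolding h_def by (rule hn_pos)
  have sum_R: "(\<Sum>k=1..m. of_real (Rnk \<alpha> m \<omega> t P n k)) = complex_of_real (S / h)"
    by (simp add: Rnk_def S_def h_def sum_divide_distrib power2_eq_square mult_ac)
  show ?thesis
  proof (cases "\<alpha> > 0")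
    case True
    define J where "J = (LINT y:{0..}|lborel. (poly (P n) y)\<^sup>2 * wt \<alpha> m \<omega> t y / y)"
    have "\<alpha> * J = h - S"
      using alpha_integral_div_by_parts[OF True, of "P n * P n"]
      by (simp add: J_def weighted_integral_pderiv_sq hn_eq_weighted_integral h_def S_def power2_eq_square)
    with \<open>0 < h\<close> have "1 / h * (\<alpha> * J) = 1 - S / h"
      by (simp add: field_simps)
    have "An \<alpha> m \<omega> t P n z = of_real (1 / h) * (of_real \<alpha> / z * of_real J) + ?poles"
      unfolding An_def set_integral_dv0_divided_difference[OF assms] using True by (simp add: J_def h_def)
    also have "\<dots> = of_real (1 / h * (\<alpha> * J)) / z + ?poles"
      by simp
    also have "\<dots> = (1 - of_real (S / h)) / z + ?poles"
      unfolding \<open>1 / h * (\<alpha> * J) = 1 - S / h\<close> by simp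
    finally show ?thesis
      unfolding sum_R .
  next
    case False
    have "An \<alpha> m \<omega> t P n z = 1 / z * (of_real (1 / h) * of_real h - of_real (S / h)) + ?poles"
      unfolding An_def set_integral_times_dv0_divided_difference[OF assms]
        hn_def[symmetric] h_def[symmetric] sum_R
      using False by simp
    with \<open>0 < h\<close> show ?thesis
      unfolding sum_R by simp
  qed
qed

lemma Bn_partial_fractions:
  assumes "z \<noteq> 0"
  shows "Bn \<alpha> m \<omega> t P n z =
    - (of_nat n + (\<Sum>k=1..m. of_real (rnk \<alpha> m \<omega> t P n k))) / z
    + (\<Sum>k=1..m. of_real (rnk \<alpha> m \<omega> t P n k) / (z - of_real (t k)))"
    (is "_ = _ + ?poles")
proof (cases n)
  case 0
  then show ?thesis
    by (simp add: Bn_def Pprev_def rnk_def)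
next
  case (Suc N)
  then have "n \<noteq> 0"
    by simp
  define h where "h = hn \<alpha> m \<omega> t P N"
  define S where "S = (\<Sum>k=1..m. \<omega> k * w0 \<alpha> (t k) * poly (P n * P N) (t k))"
  have "0 < h"
    unfolding h_def by (rule hn_pos)
  have Pprev: "Pprev P n = P N" and hprev: "hprev \<alpha> m \<omega> t P n = h"
    by (simp_all add: Suc Pprev_def hprev_def hn_def h_def)
  have sum_r: "(\<Sum>k=1..m. of_real (rnk \<alpha> m \<omega> t P n k)) = complex_of_real (S / h)"
    using \<open>n \<noteq> 0\<close> by (simp add: rnk_def S_def Pprev hprev sum_divide_distrib mult_ac)
  have orth: "(LINT y:{0..}|lborel. poly (P n) y * poly (P N) y * wt \<alpha> m \<omega> t y) = 0"
    using orthogonal Suc by simp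
  show ?thesis
  proof (cases "\<alpha> > 0")
    case True
    define J where "J = (LINT y:{0..}|lborel. poly (P n) y * poly (P N) y * wt \<alpha> m \<omega> t y / y)"
    have "weighted_integral (P n * P N) = 0"
      using orth by (simp add: weighted_integral_def)
    then have "\<alpha> * J = 0 - real n * h - S"
      using alpha_integral_div_by_parts[OF True, of "P n * P N"] weighted_integral_pderiv_consecutive[of N]
      unfolding J_def S_def h_def Suc by simp
    with \<open>0 < h\<close> have "1 / h * (\<alpha> * J) = - (real n + S / h)"
      by (simp add: field_simps)
    have "Bn \<alpha> m \<omega> t P n z = of_real (1 / h) * (of_real \<alpha> / z * of_real J) + ?poles"
      unfolding Bn_def set_integral_dv0_divided_difference[OF assms] using True by (simp add: J_def Pprev hprev)
    also have "\<dots> = of_real (1 / h * (\<alpha> * J)) / z + ?poles"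
      by simp
    also have "\<dots> = - (of_nat n + of_real (S / h)) / z + ?poles"
      unfolding \<open>1 / h * (\<alpha> * J) = - (real n + S / h)\<close> by simp
    finally show ?thesis
      unfolding sum_r .
  next
    case False
    have "Bn \<alpha> m \<omega> t P n z = 1 / z * (of_real (1 / h) * 0 - of_real (S / h) - of_nat n) + ?poles"
      unfolding Bn_def set_integral_times_dv0_divided_difference[OF assms] Pprev hprev sum_r orth
      using False by simp
    then show ?thesis
      unfolding sum_r by (simp add: field_simps)
  qed
qed

end

theorem lemma2p4:
  fixes \<alpha> :: real and m :: nat and \<omega> t :: "nat \<Rightarrow> real" and P :: "nat \<Rightarrow> real poly"
  assumes "m \<ge> 1" and "\<alpha> > -1"
    and "0 < t 1" and "\<forall>k. 1 \<le> k \<and> k < m \<longrightarrow> t k < t (Suc k)"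
    and "\<forall>l\<le>m. (\<Sum>k\<le>l. \<omega> k) \<ge> 0"
    and "\<exists>l\<le>m. (\<Sum>k\<le>l. \<omega> k) > 0"
    and "\<forall>n. degree (P n) = n \<and> lead_coeff (P n) = 1"
    and "\<forall>i j. i \<noteq> j \<longrightarrow>
           (LINT y:{0..}|lborel. poly (P i) y * poly (P j) y * wt \<alpha> m \<omega> t y) = 0"
  shows "\<forall>n. \<forall>z::complex. z \<noteq> 0 \<and> (\<forall>k\<in>{1..m}. z \<noteq> of_real (t k)) \<longrightarrow>
      An \<alpha> m \<omega> t P n z =
        (1 - (\<Sum>k=1..m. of_real (Rnk \<alpha> m \<omega> t P n k))) / z
        + (\<Sum>k=1..m. of_real (Rnk \<alpha> m \<omega> t P n k) / (z - of_real (t k)))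
    \<and> Bn \<alpha> m \<omega> t P n z =
        - (of_nat n + (\<Sum>k=1..m. of_real (rnk \<alpha> m \<omega> t P n k))) / z
        + (\<Sum>k=1..m. of_real (rnk \<alpha> m \<omega> t P n k) / (z - of_real (t k)))"
proof -
  interpret laguerre_jumps_ops \<alpha> m \<omega> t P
  proof
    show "strict_mono_on {1..m} t"
      using assms(4) by (intro strict_mono_on_atLeastAtMost_Suc) auto
  qed (fact assms)+
  show ?thesis
    using An_partial_fractions Bn_partial_fractions by blast
qed

end
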